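(* For every integer $m\ge13$, $\kappa_m\ge 0.5$.
   Context: $s(m)=m(\log m)^2$. For real $y>1$, $x>1$, $w_y(x)=1-\frac yx-\frac{y-1}{\log y}\frac{\log x}{x}$. $\kappa_m=\frac1m\sum_{p\le (m+1)/2,\ p\text{ prime}}\min_{0\le j\le m}\{\lfloor j/p\rfloor+\lfloor (m-j)/p\rfloor\}\frac{\log p}{p-1}w_p(s(m)e^{s(m)})$. *)

theory Defs
  imports Complex_Main "HOL-Computational_Algebra.Primes"
begin

definition s_fun :: "nat \<Rightarrow> real" where
  "s_fun m = real m * (ln (real m))^2"

definition w_fun :: "real \<Rightarrow> real \<Rightarrow> real" where
  "w_fun y x = 1 - y / x - (y - 1) / ln y * (ln x / x)"

definition kappa :: "nat \<Rightarrow> real" where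
  "kappa m = (1 / real m) *
     (\<Sum>p\<in>{p::nat. prime p \<and> real p \<le> (real m + 1) / 2}.
        real_of_int (Min {\<lfloor>real j / real p\<rfloor> + \<lfloor>real (m - j) / real p\<rfloor> | j. j \<le> m})
        * (ln (real p) / (real p - 1))
        * w_fun (real p) (s_fun m * exp (s_fun m)))"

end

theory Submission
  imports Defs "HOL-Analysis.Analysis"
begin

text \<open>Every summand of \<open>\<kappa>\<^sub>m\<close> is nonnegative, because \<open>w\<^sub>p(s e\<^sup>s) \<ge> 1 - 5p/e\<^sup>s\<close> and
  \<open>p \<le> m \<le> s\<close> with \<open>e\<^sup>s\<close> enormous. Keeping only the primes 2, 3, 5, 7, where
  \<open>w\<^sub>p(s e\<^sup>s) \<ge> 0.999\<close>, and bounding the minimum by \<open>\<lfloor>(m+1)/p\<rfloor> - 1\<close> (two floors lose at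
  most one carry), leaves \<open>\<Sum> 0.999 (ln p/(p-1)) (\<lfloor>(m+1)/p\<rfloor> - 1) \<ge> m/2\<close>: its slope
  \<open>\<approx> 0.655\<close> makes this linear for \<open>m \<ge> 20\<close>, and \<open>13 \<le> m \<le> 19\<close> are checked directly.\<close>

lemma div_add_le_Suc:
  fixes a b p :: nat
  assumes "p > 0"
  shows "(a + b + 1) div p \<le> a div p + b div p + 1"
proof -
  have "a mod p < p" "b mod p < p" using assms by simp_all
  then have carry: "(a mod p + b mod p + 1) div p < 2"
    by (intro less_mult_imp_div_less) linarith
  have "a + b + 1 = (a mod p + b mod p + 1) + (a div p + b div p) * p"
    using div_mult_mod_eq[of a p] div_mult_mod_eq[of b p] add_mult_distrib[of "a div p" "b div p" p]
    by linarith
  then have "(a + b + 1) div p = ((a mod p + b mod p + 1) + (a div p + b div p) * p) div p"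
    by (simp only:)
  also have "\<dots> = (a div p + b div p) + (a mod p + b mod p + 1) div p"
    using assms by (intro div_mult_self1) simp
  finally show ?thesis using carry by linarith
qed

lemma sum_power_div_le_neg_ln:
  fixes y :: real
  assumes "0 \<le> y" "y < 1"
  shows "(\<Sum>n<N. y ^ n / real n) \<le> - ln (1 - y)"
proof -
  have "(\<lambda>n. - (- (y ^ n) / real n)) sums (- ln (1 - y))"
    using sums_minus[OF ln_series'[of "-y"]] assms by simp
  then have "(\<lambda>n. y ^ n / real n) sums (- ln (1 - y))" by simp
  then have "summable (\<lambda>n. y ^ n / real n)" and "(\<Sum>n. y ^ n / real n) = - ln (1 - y)"
    by (simp_all add: sums_iff)
  moreover have "(\<Sum>n<N. y ^ n / real n) \<le> (\<Sum>n. y ^ n / real n)"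
    using assms calculation(1) by (intro sum_le_suminf) auto
  ultimately show ?thesis by simp
qed

lemma ln_2_ge: "693 / 1000 \<le> ln (2::real)"
  using sum_power_div_le_neg_ln[of "1/2" 11] by (simp add: numeral_eq_Suc ln_div)

lemma ln_3_ge: "1098 / 1000 \<le> ln (3::real)"
proof -
  have "ln (3::real) = ln 2 + ln (3/2)" by (simp add: ln_div)
  moreover have "405 / 1000 \<le> ln (3/2::real)"
    using sum_power_div_le_neg_ln[of "1/3" 7] by (simp add: numeral_eq_Suc ln_div)
  ultimately show ?thesis using ln_2_ge by linarith
qed

lemma ln_5_ge: "1609 / 1000 \<le> ln (5::real)"
proof -
  have "ln (5::real) = 2 * ln 2 + ln (5/4)" using ln_realpow[of 2 2] by (simp add: ln_div)
  moreover have "223 / 1000 \<le> ln (5/4::real)"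
    using sum_power_div_le_neg_ln[of "1/5" 5] by (simp add: numeral_eq_Suc ln_div)
  ultimately show ?thesis using ln_2_ge by linarith
qed

lemma ln_7_ge: "1945 / 1000 \<le> ln (7::real)"
proof -
  have "ln (7::real) = ln 2 + ln 3 + ln (7/6)" using ln_mult[of 2 3] by (simp add: ln_div)
  moreover have "154 / 1000 \<le> ln (7/6::real)"
    using sum_power_div_le_neg_ln[of "1/7" 5] by (simp add: numeral_eq_Suc ln_div)
  ultimately show ?thesis using ln_2_ge ln_3_ge by linarith
qed

lemma Min_floor_div_sum_ge:
  fixes m p :: nat
  assumes "p > 0"
  shows "int ((m + 1) div p) - 1
    \<le> Min {\<lfloor>real j / real p\<rfloor> + \<lfloor>real (m - j) / real p\<rfloor> | j. j \<le> m}"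
proof -
  let ?F = "\<lambda>j. \<lfloor>real j / real p\<rfloor> + \<lfloor>real (m - j) / real p\<rfloor>"
  have set_eq: "{?F j | j. j \<le> m} = ?F ` {..m}" by blast
  have F_eq: "?F j = int (j div p + (m - j) div p)" for j
    by (simp add: floor_divide_of_nat_eq)
  have "int ((m + 1) div p) - 1 \<le> int (j div p + (m - j) div p)" if "j \<le> m" for j
    using div_add_le_Suc[OF assms, of j "m - j"] that by simp
  then show ?thesis
    unfolding set_eq F_eq by (subst Min_ge_iff) auto
qed

lemma s_fun_ge:
  assumes "13 \<le> m"
  shows "4 * real m \<le> s_fun m"
proof -
  have "ln (8::real) = 3 * ln 2" using ln_realpow[of 2 3] by simp
  moreover have "ln 8 \<le> ln (real m)" using assms by simp
  ultimately have "2 \<le> ln (real m)" using ln_2_ge by linarith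
  then have "2 ^ 2 \<le> (ln (real m)) ^ 2" by (intro power_mono) auto
  then have "real m * 4 \<le> real m * (ln (real m)) ^ 2" by (intro mult_left_mono) auto
  then show ?thesis by (simp add: s_fun_def mult.commute)
qed

lemma linear_le_exp:
  fixes s :: real
  assumes "52 \<le> s"
  shows "680 * s \<le> exp s"
proof -
  define t where "t = 1 + s / 4"
  have "14 ^ 3 \<le> t ^ 3" using assms by (intro power_mono) (auto simp: t_def)
  then have "680 * s \<le> (s / 4) * t ^ 3" using assms by simp
  also have "\<dots> \<le> t * t ^ 3" using assms by (intro mult_right_mono) (auto simp: t_def)
  also have "\<dots> = t ^ 4" by (simp add: power3_eq_cube power4_eq_xxxx)
  also have "\<dots> \<le> exp (s / 4) ^ 4"
    using assms unfolding t_def by (intro power_mono exp_ge_add_one_self) simp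
  also have "\<dots> = exp s" by (simp flip: exp_of_nat_mult)
  finally show ?thesis .
qed

lemma w_fun_ge:
  fixes p s :: real
  assumes "2 \<le> p" "1 \<le> s"
  shows "1 - 5 * p / exp s \<le> w_fun p (s * exp s)"
proof -
  define E where "E = exp s"
  have "E > 0" by (simp add: E_def)
  have "ln 2 \<le> ln p" using assms by simp
  then have "1 / 2 \<le> ln p" using ln_2_ge by linarith
  then have "(p - 1) / ln p \<le> (p - 1) / (1 / 2)" using assms by (intro divide_left_mono) auto
  then have coeff: "(p - 1) / ln p \<le> 2 * p" by simp
  have ln_eq: "ln (s * E) = ln s + s" using assms by (simp add: E_def ln_mult)
  have "ln s \<le> s" using assms by (intro less_imp_le ln_less_self) simp
  then have "ln (s * E) / (s * E) \<le> (2 * s) / (s * E)"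
    using ln_eq \<open>E > 0\<close> assms by (intro divide_right_mono) auto
  then have log_ratio: "ln (s * E) / (s * E) \<le> 2 / E" using assms by simp
  have "0 \<le> ln (s * E) / (s * E)" using ln_eq assms \<open>E > 0\<close> by simp
  then have "(p - 1) / ln p * (ln (s * E) / (s * E)) \<le> 2 * p * (2 / E)"
    using coeff log_ratio assms by (intro mult_mono) auto
  moreover have "p / (s * E) \<le> p / E"
    using assms \<open>E > 0\<close> by (intro divide_left_mono) (auto simp: mult_le_cancel_right1)
  ultimately have "1 - p / E - 2 * p * (2 / E) \<le> w_fun p (s * E)"
    unfolding w_fun_def by linarith
  then show ?thesis by (simp add: E_def)
qed

lemma w_fun_s_fun_ge:
  assumes "13 \<le> m" "2 \<le> p"
  shows "1 - p / (136 * s_fun m) \<le> w_fun p (s_fun m * exp (s_fun m))"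
proof -
  have s_ge: "52 \<le> s_fun m" using s_fun_ge[OF assms(1)] assms(1) by linarith
  then have "5 * p / exp (s_fun m) \<le> 5 * p / (680 * s_fun m)"
    using linear_le_exp[OF s_ge] assms by (intro divide_left_mono) auto
  then show ?thesis using w_fun_ge[of p "s_fun m"] s_ge assms by simp
qed

definition kappa_term :: "nat \<Rightarrow> nat \<Rightarrow> real" where
  "kappa_term m p =
     real_of_int (Min {\<lfloor>real j / real p\<rfloor> + \<lfloor>real (m - j) / real p\<rfloor> | j. j \<le> m})
     * (ln (real p) / (real p - 1))
     * w_fun (real p) (s_fun m * exp (s_fun m))"

lemma kappa_eq_sum:
  "kappa m = (\<Sum>p\<in>{p. prime p \<and> real p \<le> (real m + 1) / 2}. kappa_term m p) / real m"
  unfolding kappa_def kappa_term_def by simp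

lemma kappa_term_nonneg:
  assumes "13 \<le> m" "2 \<le> p" "p \<le> m"
  shows "0 \<le> kappa_term m p"
proof -
  have "1 \<le> (m + 1) div p" using div_le_mono[of p "m + 1" p] assms by simp
  then have "0 \<le> Min {\<lfloor>real j / real p\<rfloor> + \<lfloor>real (m - j) / real p\<rfloor> | j. j \<le> m}"
    using Min_floor_div_sum_ge[of p m] assms by linarith
  moreover have "0 \<le> ln (real p) / (real p - 1)" using assms by simp
  moreover have "real p / (136 * s_fun m) \<le> 1"
    using s_fun_ge[OF assms(1)] assms by (simp add: divide_le_eq)
  then have "0 \<le> w_fun (real p) (s_fun m * exp (s_fun m))"
    using w_fun_s_fun_ge[of m "real p"] assms by simp
  ultimately show ?thesis unfolding kappa_term_def by (intro mult_nonneg_nonneg) auto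
qed

lemma kappa_term_ge:
  assumes "13 \<le> m" "2 \<le> p" "p \<le> 7" "0 \<le> a" "a \<le> 999 / 1000 * (ln (real p) / (real p - 1))"
  shows "a * (real ((m + 1) div p) - 1) \<le> kappa_term m p"
proof -
  define K where "K = real_of_int (Min {\<lfloor>real j / real p\<rfloor> + \<lfloor>real (m - j) / real p\<rfloor> | j. j \<le> m})"
  define c where "c = ln (real p) / (real p - 1)"
  define w where "w = w_fun (real p) (s_fun m * exp (s_fun m))"
  have "1 \<le> (m + 1) div p" using div_le_mono[of p "m + 1" p] assms by simp
  then have q: "0 \<le> real ((m + 1) div p) - 1" by simp
  have K: "real ((m + 1) div p) - 1 \<le> K"
    using Min_floor_div_sum_ge[of p m] assms unfolding K_def by linarith
  have c: "0 \<le> c" using assms by (simp add: c_def)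
  have "real p / (136 * s_fun m) \<le> 1 / 1000"
    using s_fun_ge[OF assms(1)] assms by (simp add: divide_le_eq)
  then have w: "999 / 1000 \<le> w"
    using w_fun_s_fun_ge[of m "real p"] assms unfolding w_def by simp
  have "a * (real ((m + 1) div p) - 1) \<le> (999 / 1000 * c) * K"
    using assms q K c unfolding c_def by (intro mult_mono) auto
  also have "\<dots> = K * c * (999 / 1000)" by simp
  also have "\<dots> \<le> K * c * w" using q K c w by (intro mult_left_mono) auto
  finally show ?thesis by (simp add: kappa_term_def K_def c_def w_def)
qed

text \<open>The weights are lower bounds for \<open>0.999 \<cdot> ln p / (p - 1)\<close>.\<close>

lemma weighted_div_sum_ge:
  fixes m :: nat
  assumes "13 \<le> m"
  shows "real m / 2 \<le> 692 / 1000 * (real ((m + 1) div 2) - 1) + 548 / 1000 * (real ((m + 1) div 3) - 1)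
                     + 401 / 1000 * (real ((m + 1) div 5) - 1) + 323 / 1000 * (real ((m + 1) div 7) - 1)"
proof (cases "m \<le> 19")
  case True
  then have "m = 13 \<or> m = 14 \<or> m = 15 \<or> m = 16 \<or> m = 17 \<or> m = 18 \<or> m = 19"
    using assms by linarith
  then show ?thesis by (elim disjE) simp_all
next
  case False
  have bound: "real m + 2 \<le> real ((m + 1) div p) * real p + real p" if "p > 0" for p
  proof -
    have "m + 2 \<le> (m + 1) div p * p + p"
      using div_mult_mod_eq[of "m + 1" p] mod_less_divisor[OF that, of "m + 1"] by linarith
    then have "real (m + 2) \<le> real ((m + 1) div p * p + p)" by (simp only: of_nat_le_iff)
    then show ?thesis by simp
  qed
  have "20 \<le> real m" using False by simp
  with bound[of 2] bound[of 3] bound[of 5] bound[of 7] show ?thesis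
    by (simp add: field_simps)
qed

theorem lemma6p5:
  fixes m :: nat
  assumes "m \<ge> 13"
  shows "kappa m \<ge> 0.5"
proof -
  let ?P = "{p. prime p \<and> real p \<le> (real m + 1) / 2}"
  have "finite ?P" by (rule finite_subset[of _ "{..m}"]) auto
  moreover have "{2, 3, 5, 7} \<subseteq> ?P" using assms by auto
  moreover have "0 \<le> kappa_term m p" if "p \<in> ?P" for p
    using that assms prime_ge_2_nat[of p] by (intro kappa_term_nonneg) auto
  ultimately have "(\<Sum>p\<in>{2, 3, 5, 7}. kappa_term m p) \<le> (\<Sum>p\<in>?P. kappa_term m p)"
    by (rule sum_mono2) auto
  moreover have "(\<Sum>p\<in>{2, 3, 5, 7}. kappa_term m p)
      = kappa_term m 2 + kappa_term m 3 + kappa_term m 5 + kappa_term m 7" by simp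
  moreover have "692 / 1000 * (real ((m + 1) div 2) - 1) \<le> kappa_term m 2"
    using ln_2_ge assms by (intro kappa_term_ge) auto
  moreover have "548 / 1000 * (real ((m + 1) div 3) - 1) \<le> kappa_term m 3"
    using ln_3_ge assms by (intro kappa_term_ge) auto
  moreover have "401 / 1000 * (real ((m + 1) div 5) - 1) \<le> kappa_term m 5"
    using ln_5_ge assms by (intro kappa_term_ge) auto
  moreover have "323 / 1000 * (real ((m + 1) div 7) - 1) \<le> kappa_term m 7"
    using ln_7_ge assms by (intro kappa_term_ge) auto
  ultimately have "real m / 2 \<le> (\<Sum>p\<in>?P. kappa_term m p)"
    using weighted_div_sum_ge[OF assms] by linarith
  then show ?thesis using assms by (simp add: kappa_eq_sum field_simps)
qed

end
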